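(* Let $\mathcal{T}$ be a tangle of order $k$ in a connectivity system $(E,\lambda)$, and let $X$ be a $\mathcal{T}$-strong $k$-separating set in $\lambda$. If $(X_i)_{i=1}^m$ is a partial $k$-sequence for $X$, then $X\cup \bigcup_{i=1}^m X_i\subseteq \mathrm{fcl}_{\mathcal{T}}(X)$.
   Context: A connectivity system is a pair $(E,\lambda)$ with $E$ finite and $\lambda$ an integer-valued symmetric submodular function on subsets of $E$. $X$ is $k$-separating if $\lambda(X)\le k$. A tangle of order $k$ is a collection $\mathcal T$ of subsets of $E$ with (T1) $\lambda(A)<k$ for $A\in\mathcal T$; (T2) if $\lambda(A)\le k-1$ then $A\in\mathcal T$ or $E-A\in\mathcal T$; (T3) $A\cup B\cup C\ne E$ for $A,B,C\in\mathcal T$; (T4) $E-\{e\}\notin\mathcal T$ for $e\in E$. A set is $\mathcal T$-weak if contained in a member of $\mathcal T$, and $\mathcal T$-strong otherwise. A $\mathcal T$-strong $k$-separating set $X$ is fully closed if $X\cup Y$ is not $k$-separating for every nonempty $\mathcal T$-weak $Y\subseteq E-X$. For a $\mathcal T$-strong $k$-separating $X$, $\mathrm{fcl}_{\mathcal T}(X)$ is the intersection of all fully closed $k$-separating sets containing $X$. A partial $k$-sequence for $X$ is a sequence $(X_i)_{i=1}^m$ of pairwise disjoint nonempty $\mathcal T$-weak subsets of $E-X$ such that $X\cup\bigcup_{i=1}^jX_i$ is $k$-separating for all $j\in\{1,\dots,m\}$. *)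

theory Defs
  imports Main
begin

definition connectivity_system :: "'a set \<Rightarrow> ('a set \<Rightarrow> int) \<Rightarrow> bool" where
  "connectivity_system E lam \<longleftrightarrow> finite E \<and>
     (\<forall>X. X \<subseteq> E \<longrightarrow> lam X = lam (E - X)) \<and>
     (\<forall>X Y. X \<subseteq> E \<longrightarrow> Y \<subseteq> E \<longrightarrow> lam X + lam Y \<ge> lam (X \<union> Y) + lam (X \<inter> Y))"

definition k_separating :: "('a set \<Rightarrow> int) \<Rightarrow> int \<Rightarrow> 'a set \<Rightarrow> bool" where
  "k_separating lam k X \<longleftrightarrow> lam X \<le> k"

definition tangle :: "'a set \<Rightarrow> ('a set \<Rightarrow> int) \<Rightarrow> int \<Rightarrow> 'a set set \<Rightarrow> bool" where
  "tangle E lam k T \<longleftrightarrow>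
     (\<forall>A\<in>T. A \<subseteq> E) \<and>
     (\<forall>A\<in>T. lam A < k) \<and>
     (\<forall>A. A \<subseteq> E \<longrightarrow> lam A \<le> k - 1 \<longrightarrow> A \<in> T \<or> E - A \<in> T) \<and>
     (\<forall>A\<in>T. \<forall>B\<in>T. \<forall>C\<in>T. A \<union> B \<union> C \<noteq> E) \<and>
     (\<forall>e\<in>E. E - {e} \<notin> T)"

definition T_weak :: "'a set set \<Rightarrow> 'a set \<Rightarrow> bool" where
  "T_weak T Y \<longleftrightarrow> (\<exists>A\<in>T. Y \<subseteq> A)"

definition T_strong :: "'a set set \<Rightarrow> 'a set \<Rightarrow> bool" where
  "T_strong T Y \<longleftrightarrow> \<not> T_weak T Y"

definition fully_closed :: "'a set \<Rightarrow> ('a set \<Rightarrow> int) \<Rightarrow> int \<Rightarrow> 'a set set \<Rightarrow> 'a set \<Rightarrow> bool" where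
  "fully_closed E lam k T X \<longleftrightarrow> X \<subseteq> E \<and> T_strong T X \<and> k_separating lam k X \<and>
     (\<forall>Y. Y \<subseteq> E - X \<longrightarrow> Y \<noteq> {} \<longrightarrow> T_weak T Y \<longrightarrow> \<not> k_separating lam k (X \<union> Y))"

definition fcl :: "'a set \<Rightarrow> ('a set \<Rightarrow> int) \<Rightarrow> int \<Rightarrow> 'a set set \<Rightarrow> 'a set \<Rightarrow> 'a set" where
  "fcl E lam k T X = \<Inter> {Z. fully_closed E lam k T Z \<and> X \<subseteq> Z}"

definition partial_k_sequence ::
  "'a set \<Rightarrow> ('a set \<Rightarrow> int) \<Rightarrow> int \<Rightarrow> 'a set set \<Rightarrow> 'a set \<Rightarrow> (nat \<Rightarrow> 'a set) \<Rightarrow> nat \<Rightarrow> bool" where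
  "partial_k_sequence E lam k T X Xs m \<longleftrightarrow>
     (\<forall>i\<in>{1..m}. Xs i \<subseteq> E - X \<and> Xs i \<noteq> {} \<and> T_weak T (Xs i)) \<and>
     (\<forall>i\<in>{1..m}. \<forall>j\<in>{1..m}. i \<noteq> j \<longrightarrow> Xs i \<inter> Xs j = {}) \<and>
     (\<forall>j\<in>{1..m}. k_separating lam k (X \<union> (\<Union>i\<in>{1..j}. Xs i)))"

end

theory Submission
  imports Defs
begin

text \<open>Let \<open>Z\<close> be fully closed with \<open>X \<subseteq> Z\<close>; one shows inductively that each \<open>X\<^sub>j\<close> lies in \<open>Z\<close>.
Put \<open>S = X \<union> X\<^sub>1 \<union> \<dots> \<union> X\<^sub>j\<close>. If \<open>S - Z \<subseteq> X\<^sub>j\<close> were nonempty, then \<open>Z \<noteq> E\<close>, and since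
\<open>\<lambda>(E) \<le> \<lambda>(Z) \<le> k\<close> full closure forces \<open>E - Z\<close> to be \<open>\<T>\<close>-strong. Then \<open>S \<inter> Z \<supseteq> X\<close> and its
complement are both \<open>\<T>\<close>-strong, so (T2) gives \<open>\<lambda>(S \<inter> Z) \<ge> k\<close>, and submodularity yields
\<open>\<lambda>(Z \<union> (S - Z)) \<le> k\<close>, contradicting full closure of \<open>Z\<close> with the weak set \<open>S - Z\<close>.\<close>

lemma T_strong_mono: "T_strong T A \<Longrightarrow> A \<subseteq> B \<Longrightarrow> T_strong T B"
  unfolding T_strong_def T_weak_def by blast

lemma T_weak_subset: "T_weak T B \<Longrightarrow> A \<subseteq> B \<Longrightarrow> T_weak T A"
  unfolding T_weak_def by blast

lemma connectivity_system_symmetric: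
  "connectivity_system E lam \<Longrightarrow> A \<subseteq> E \<Longrightarrow> lam (E - A) = lam A"
  unfolding connectivity_system_def by (metis (no_types))

lemma connectivity_system_submodular:
  "connectivity_system E lam \<Longrightarrow> A \<subseteq> E \<Longrightarrow> B \<subseteq> E \<Longrightarrow>
    lam (A \<union> B) + lam (A \<inter> B) \<le> lam A + lam B"
  unfolding connectivity_system_def by blast

lemma connectivity_system_ground_le:
  assumes cs: "connectivity_system E lam" and XE: "X \<subseteq> E"
  shows "lam E \<le> lam X"
proof -
  have "lam (X \<union> (E - X)) + lam (X \<inter> (E - X)) \<le> lam X + lam (E - X)"
    using connectivity_system_submodular[OF cs XE] by blast
  moreover have "X \<union> (E - X) = E" "X \<inter> (E - X) = {}" using XE by auto
  moreover have "lam (E - X) = lam X" "lam {} = lam E"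
    using connectivity_system_symmetric[OF cs XE] connectivity_system_symmetric[OF cs, of E]
    by simp_all
  ultimately show ?thesis by simp
qed

lemma tangle_strong_both_sides:
  assumes "tangle E lam k T" "A \<subseteq> E" "T_strong T A" "T_strong T (E - A)"
  shows "k \<le> lam A"
proof (rule ccontr)
  assume "\<not> k \<le> lam A"
  then have "A \<in> T \<or> E - A \<in> T" using assms(1,2) unfolding tangle_def by simp
  then show False using assms(3,4) unfolding T_strong_def T_weak_def by blast
qed

lemma fully_closed_complement_strong:
  assumes cs: "connectivity_system E lam" and fc: "fully_closed E lam k T Z" and "Z \<noteq> E"
  shows "T_strong T (E - Z)"
proof -
  have ZE: "Z \<subseteq> E" and "lam Z \<le> k"
    using fc unfolding fully_closed_def k_separating_def by auto
  then have "k_separating lam k (Z \<union> (E - Z))"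
    using connectivity_system_ground_le[OF cs] unfolding k_separating_def
    by (metis Un_Diff_cancel Un_absorb1 order_trans)
  moreover have "E - Z \<noteq> {}" using ZE \<open>Z \<noteq> E\<close> by auto
  ultimately show ?thesis
    using fc unfolding fully_closed_def T_strong_def by blast
qed

lemma fully_closed_absorbs_weak_extension:
  assumes cs: "connectivity_system E lam" and tg: "tangle E lam k T"
    and fc: "fully_closed E lam k T Z"
    and SE: "S \<subseteq> E" and sep: "k_separating lam k S"
    and strong: "T_strong T (S \<inter> Z)" and weak: "T_weak T (S - Z)"
  shows "S \<subseteq> Z"
proof (rule ccontr)
  assume "\<not> S \<subseteq> Z"
  then have ne: "S - Z \<noteq> {}" by blast
  have ZE: "Z \<subseteq> E" and lZ: "lam Z \<le> k"
    using fc unfolding fully_closed_def k_separating_def by auto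
  have "T_strong T (E - Z)"
    using fully_closed_complement_strong[OF cs fc] ne SE by blast
  then have "T_strong T (E - (S \<inter> Z))" by (rule T_strong_mono) blast
  then have "k \<le> lam (S \<inter> Z)"
    using tangle_strong_both_sides[OF tg _ strong] SE by blast
  moreover have "lam (Z \<union> S) + lam (Z \<inter> S) \<le> lam Z + lam S"
    using connectivity_system_submodular[OF cs ZE SE] .
  ultimately have "k_separating lam k (Z \<union> (S - Z))"
    using lZ sep unfolding k_separating_def by (simp add: Int_commute)
  moreover have "S - Z \<subseteq> E - Z" using SE by blast
  ultimately show False
    using fc ne weak unfolding fully_closed_def by blast
qed

lemma partial_k_sequence_subset_fully_closed:
  assumes cs: "connectivity_system E lam" and tg: "tangle E lam k T"
    and XE: "X \<subseteq> E" and X_strong: "T_strong T X"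
    and seq: "partial_k_sequence E lam k T X Xs m"
    and fc: "fully_closed E lam k T Z" and XZ: "X \<subseteq> Z"
  shows "X \<union> (\<Union>i\<in>{1..m}. Xs i) \<subseteq> Z"
proof -
  have parts: "\<And>i. i \<in> {1..m} \<Longrightarrow> Xs i \<subseteq> E - X \<and> T_weak T (Xs i)"
    and sep: "\<And>j. j \<in> {1..m} \<Longrightarrow> k_separating lam k (X \<union> (\<Union>i\<in>{1..j}. Xs i))"
    using seq unfolding partial_k_sequence_def by blast+
  have "X \<union> (\<Union>i\<in>{1..j}. Xs i) \<subseteq> Z" if "j \<le> m" for j
    using that
  proof (induction j)
    case 0
    then show ?case using XZ by simp
  next
    case (Suc j)
    define S where "S = X \<union> (\<Union>i\<in>{1..Suc j}. Xs i)"
    have j: "Suc j \<in> {1..m}" using Suc.prems by simp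
    have "{1..Suc j} = insert (Suc j) {1..j}" by auto
    then have S_eq: "S = (X \<union> (\<Union>i\<in>{1..j}. Xs i)) \<union> Xs (Suc j)"
      unfolding S_def by auto
    have "S \<subseteq> E" using parts XE Suc.prems unfolding S_def by fastforce
    moreover have "T_strong T (S \<inter> Z)"
      using X_strong by (rule T_strong_mono) (use XZ S_def in blast)
    moreover have "T_weak T (S - Z)"
      using parts[OF j] by (rule T_weak_subset[OF conjunct2]) (use Suc S_eq in auto)
    ultimately have "S \<subseteq> Z"
      using fully_closed_absorbs_weak_extension[OF cs tg fc] sep[OF j] S_def by blast
    then show ?case unfolding S_def .
  qed
  from this[of m] show ?thesis by simp
qed

theorem lemma3p4:
  fixes E :: "'a set" and lam :: "'a set \<Rightarrow> int" and k :: int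
    and T :: "'a set set" and X :: "'a set" and Xs :: "nat \<Rightarrow> 'a set" and m :: nat
  assumes "connectivity_system E lam"
    and "tangle E lam k T"
    and "X \<subseteq> E"
    and "T_strong T X"
    and "k_separating lam k X"
    and "partial_k_sequence E lam k T X Xs m"
  shows "X \<union> (\<Union>i\<in>{1..m}. Xs i) \<subseteq> fcl E lam k T X"
  unfolding fcl_def
  using partial_k_sequence_subset_fully_closed[OF assms(1-4,6)] by blast

end
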